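(* Let $\alpha>1$ and $D,R_{tot},L_0>0$. For $\mu>0$ let $\sigma_0=\sigma_0^{(\mu)}$ be the positive solution of $-u''=-u+u^\alpha$ on $[-\mu L_0,\mu L_0]$ with zero Dirichlet data, and $\|\sigma_0\|_1=\int_{-\mu L_0}^{\mu L_0}\sigma_0$. (i) Let $k_{nf},k_{pf}>0$ satisfy $$\Lambda(k_{nf},k_{pf})=\frac{k_{nf}}{k_{pf}}-\frac{1}{\alpha}\left(\frac{\alpha-1}{\alpha}\sqrt{\frac{k_{nf}}{D}}\frac{R_{tot}}{\|\sigma_0\|_1}\right)^{\alpha-1}\le 0,$$ where $\sigma_0=\sigma_0^{(\mu)}$ with $\mu=\sqrt{k_{nf}/D}$. Let $\lambda>0$ be a root of $g(\lambda)=\frac{k_{nf}}{k_{pf}}-\lambda^{\alpha-1}+\frac{1}{R_{tot}}\lambda^{\alpha}\frac{1}{\mu}\|\sigma_0\|_1$. Then $\mu>0$, $\lambda>0$ and $\Lambda^*(\mu,\lambda):=\mu R_{tot}-\lambda\|\sigma_0\|_1>0$. (ii) Conversely, let $\mu>0$, $\lambda>0$ with $\Lambda^*(\mu,\lambda)>0$, and define $k_{nf}=D\mu^2$ and $$k_{pf}=\frac{D\mu^2}{\lambda^{\alpha-1}-\frac{\lambda^{\alpha}\|\sigma_0\|_1}{\mu R_{tot}}}.$$ Then $k_{nf}>0$, $k_{pf}>0$, $\Lambda(k_{nf},k_{pf})\le0$, and $\lambda$ is a root of $g$ for these parameters. Thus the constrained model $Y_j=R(X_j;k_{nf},k_{pf})+\epsilon_j$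 (with $R$ a solution of the integro-differential equation $-DR''=-k_{nf}R+k_{pf}R^\alpha(1-\int_{-L_0}^{L_0}R/R_{tot})$, $R(\pm L_0)=0$) is equivalently reparametrized as $Y_j=\lambda\sigma_0(\mu X_j)+\epsilon_j$ subject to $\mu>0$, $\lambda>0$, $\Lambda^*(\mu,\lambda)>0$.
   Context: The positive solution of $-u''=-u+u^\alpha$ with zero Dirichlet data on a bounded symmetric interval exists and is unique (part of the setting). For given $(k_{nf},k_{pf})$, $\lambda\sigma_0(\mu x)$ with $\mu=\sqrt{k_{nf}/D}$ solves the integro-differential equation iff $g(\lambda)=0$. *)

theory Defs
  imports "HOL-Analysis.Analysis"
begin

text \<open>u is the positive solution of  -u'' = -u + u^alpha  on [-a,a] with u(-a) = u(a) = 0.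
  Convention: u is extended by zero outside [-a,a] (so that the solution is a unique function).\<close>
definition is_pos_sol :: "real \<Rightarrow> real \<Rightarrow> (real \<Rightarrow> real) \<Rightarrow> bool" where
  "is_pos_sol \<alpha> a u \<longleftrightarrow>
     continuous_on {-a..a} u \<and>
     (\<exists>u'. \<forall>x\<in>{-a<..<a}. (u has_real_derivative u' x) (at x) \<and>
                           (u' has_real_derivative (u x - (u x) powr \<alpha>)) (at x)) \<and>
     (\<forall>x\<in>{-a<..<a}. u x > 0) \<and> u (-a) = 0 \<and> u a = 0 \<and>
     (\<forall>x. x \<notin> {-a..a} \<longrightarrow> u x = 0)"

definition sigma0 :: "real \<Rightarrow> real \<Rightarrow> real \<Rightarrow> (real \<Rightarrow> real)" where
  "sigma0 \<alpha> L0 mu = (THE u. is_pos_sol \<alpha> (mu * L0) u)"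

definition norm1 :: "real \<Rightarrow> real \<Rightarrow> real \<Rightarrow> real" where
  "norm1 \<alpha> L0 mu = integral {-(mu * L0)..mu * L0} (sigma0 \<alpha> L0 mu)"

definition Lam :: "real \<Rightarrow> real \<Rightarrow> real \<Rightarrow> real \<Rightarrow> real \<Rightarrow> real \<Rightarrow> real" where
  "Lam \<alpha> D Rtot L0 knf kpf =
     knf / kpf - (1 / \<alpha>) *
       (((\<alpha> - 1) / \<alpha>) * sqrt (knf / D) * Rtot / norm1 \<alpha> L0 (sqrt (knf / D))) powr (\<alpha> - 1)"

definition gfun :: "real \<Rightarrow> real \<Rightarrow> real \<Rightarrow> real \<Rightarrow> real \<Rightarrow> real \<Rightarrow> real \<Rightarrow> real" where
  "gfun \<alpha> D Rtot L0 knf kpf lam =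
     (let mu = sqrt (knf / D) in
      knf / kpf - lam powr (\<alpha> - 1) + (1 / Rtot) * lam powr \<alpha> * (1 / mu) * norm1 \<alpha> L0 mu)"

definition Lam_star :: "real \<Rightarrow> real \<Rightarrow> real \<Rightarrow> real \<Rightarrow> real \<Rightarrow> real" where
  "Lam_star \<alpha> Rtot L0 mu lam = mu * Rtot - lam * norm1 \<alpha> L0 mu"

end

theory Submission
  imports Defs
begin

text \<open>Write N for the L1 norm of sigma_0 and c = N / (mu Rtot). The root equation g(lam) = 0
  reads knf/kpf = lam^(alpha-1) (1 - c lam), so positivity of the left side is exactly
  Lam_star > 0; in particular part (i) does not need the hypothesis Lam \<le> 0. Conversely this
  equation defines kpf from (mu, lam), and Lam \<le> 0 then says that knf/kpf does not exceed
  the maximum of lam^(alpha-1) (1 - c lam) over lam > 0, which is (1/alpha) ((alpha-1)/(alpha c))^(alpha-1)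
  by Young's inequality.\<close>

lemma powr_diff_mult_powr_eq:
  fixes l a c :: real
  assumes "l > 0"
  shows "l powr (a - 1) - c * l powr a = l powr (a - 1) * (1 - c * l)"
proof -
  have "l powr a = l powr (a - 1) * l"
    using assms by (simp add: powr_diff)
  then show ?thesis by (simp add: algebra_simps)
qed

lemma powr_diff_mult_powr_le_max:
  fixes a c l :: real
  assumes a: "a > 1" and c: "c > 0" and l: "l > 0"
  shows "l powr (a - 1) - c * l powr a \<le> (1 / a) * ((a - 1) / (a * c)) powr (a - 1)"
proof -
  \<comment> \<open>Rescale by the maximiser L, then Young's inequality with exponents a and a/(a-1).\<close>
  define L where "L = (a - 1) / (a * c)"
  have L: "L > 0" using a c by (simp add: L_def)
  define x where "x = l / L"
  have x: "x > 0" using l L by (simp add: x_def)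
  have lx: "l = L * x" using L by (simp add: x_def)
  have "1 * x powr (a - 1) \<le> 1 powr a / a + (x powr (a - 1)) powr (a / (a - 1)) / (a / (a - 1))"
    by (rule Youngs_inequality) (use a in \<open>auto simp: field_simps\<close>)
  moreover have "(x powr (a - 1)) powr (a / (a - 1)) = x powr a"
    using a by (simp add: powr_powr)
  ultimately have young: "x powr (a - 1) \<le> 1 / a + ((a - 1) / a) * x powr a"
    by (simp add: mult.commute)
  have cL: "c * L = (a - 1) / a" using a c by (simp add: L_def field_simps)
  have "l powr (a - 1) - c * l powr a = L powr (a - 1) * (x powr (a - 1) - (c * L) * x powr a)"
    using lx L x by (simp add: powr_mult powr_diff algebra_simps)
  also have "\<dots> \<le> L powr (a - 1) * (1 / a)"
    using young L unfolding cL by (intro mult_left_mono) auto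
  finally show ?thesis unfolding L_def by simp
qed

lemma norm1_pos:
  assumes "\<forall>mu>0. \<exists>!u. is_pos_sol \<alpha> (mu * L0) u" and "mu > 0" and "L0 > 0"
  shows "norm1 \<alpha> L0 mu > 0"
proof -
  let ?a = "mu * L0" and ?u = "sigma0 \<alpha> L0 mu"
  have a: "?a > 0" using assms by simp
  have "is_pos_sol \<alpha> ?a ?u"
    unfolding sigma0_def using assms by (metis theI')
  then have cont: "continuous_on {-?a..?a} ?u"
    and pos: "\<forall>x\<in>{-?a<..<?a}. ?u x > 0"
    and ends: "?u (-?a) = 0" "?u ?a = 0"
    unfolding is_pos_sol_def by auto
  have nonneg: "?u x \<ge> 0" if "x \<in> {-?a..?a}" for x
    using that ends pos by (cases "x = -?a \<or> x = ?a") (auto intro: less_imp_le)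
  have "integral {-?a..?a} ?u \<ge> 0"
    using integral_nonneg[OF integrable_continuous_interval[OF cont]] nonneg by auto
  moreover have "integral {-?a..?a} ?u \<noteq> 0"
  proof
    assume "integral {-?a..?a} ?u = 0"
    then have "?u 0 = 0"
      using integral_eq_0_iff[OF cont _ nonneg] a by simp
    moreover have "?u 0 > 0" using pos a by auto
    ultimately show False by simp
  qed
  ultimately show ?thesis unfolding norm1_def by linarith
qed

lemma Lam_star_pos_if_gfun_root:
  assumes "D > 0" "Rtot > 0" "knf > 0" "kpf > 0" "lam > 0"
    and root: "gfun \<alpha> D Rtot L0 knf kpf lam = 0"
  shows "Lam_star \<alpha> Rtot L0 (sqrt (knf / D)) lam > 0"
proof -
  define mu where "mu = sqrt (knf / D)"
  define c where "c = norm1 \<alpha> L0 mu / (mu * Rtot)"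
  have mu: "mu > 0" using assms by (simp add: mu_def)
  have "knf / kpf = lam powr (\<alpha> - 1) - c * lam powr \<alpha>"
    using root mu assms unfolding gfun_def Let_def mu_def[symmetric] c_def
    by (simp add: field_simps)
  also have "\<dots> = lam powr (\<alpha> - 1) * (1 - c * lam)"
    using \<open>lam > 0\<close> by (rule powr_diff_mult_powr_eq)
  finally have "lam powr (\<alpha> - 1) * (1 - c * lam) > 0"
    using assms by (metis divide_pos_pos)
  then have "c * lam < 1"
    using assms by (simp add: zero_less_mult_iff)
  then show ?thesis
    using mu assms unfolding Lam_star_def mu_def[symmetric] c_def by (simp add: field_simps)
qed

lemma gfun_root_if_Lam_star_pos:
  assumes \<alpha>: "\<alpha> > 1" and "D > 0" "Rtot > 0" "mu > 0" "lam > 0"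
    and N: "norm1 \<alpha> L0 mu > 0"
    and star: "Lam_star \<alpha> Rtot L0 mu lam > 0"
  defines "den \<equiv> lam powr (\<alpha> - 1) - lam powr \<alpha> * norm1 \<alpha> L0 mu / (mu * Rtot)"
  shows "den > 0"
    and "Lam \<alpha> D Rtot L0 (D * mu^2) (D * mu^2 / den) \<le> 0"
    and "gfun \<alpha> D Rtot L0 (D * mu^2) (D * mu^2 / den) lam = 0"
proof -
  define c where "c = norm1 \<alpha> L0 mu / (mu * Rtot)"
  have c: "c > 0" using assms by (simp add: c_def)
  have den_c: "den = lam powr (\<alpha> - 1) - c * lam powr \<alpha>"
    unfolding den_def c_def by simp
  have "c * lam < 1"
    using star assms unfolding Lam_star_def c_def by (simp add: field_simps)
  then show den: "den > 0"
    unfolding den_c powr_diff_mult_powr_eq[OF \<open>lam > 0\<close>] using assms by simp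
  have sqrt_mu: "sqrt (D * mu^2 / D) = mu" using assms by simp
  have ratio: "D * mu^2 / (D * mu^2 / den) = den" using assms den by simp
  have "den \<le> (1 / \<alpha>) * ((\<alpha> - 1) / (\<alpha> * c)) powr (\<alpha> - 1)"
    unfolding den_c using \<alpha> c \<open>lam > 0\<close> by (rule powr_diff_mult_powr_le_max)
  moreover have "(\<alpha> - 1) / (\<alpha> * c) = ((\<alpha> - 1) / \<alpha>) * mu * Rtot / norm1 \<alpha> L0 mu"
    using assms unfolding c_def by (simp add: field_simps)
  ultimately show "Lam \<alpha> D Rtot L0 (D * mu^2) (D * mu^2 / den) \<le> 0"
    unfolding Lam_def sqrt_mu ratio by (simp add: mult.assoc)
  show "gfun \<alpha> D Rtot L0 (D * mu^2) (D * mu^2 / den) lam = 0"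
    unfolding gfun_def Let_def sqrt_mu ratio by (simp add: den_def)
qed

theorem proposition1:
  fixes \<alpha> D Rtot L0 :: real
  assumes "\<alpha> > 1" and "D > 0" and "Rtot > 0" and "L0 > 0"
    and setting: "\<forall>mu>0. \<exists>!u. is_pos_sol \<alpha> (mu * L0) u"
  shows
    "(\<forall>knf kpf lam. knf > 0 \<longrightarrow> kpf > 0 \<longrightarrow> Lam \<alpha> D Rtot L0 knf kpf \<le> 0 \<longrightarrow>
        lam > 0 \<longrightarrow> gfun \<alpha> D Rtot L0 knf kpf lam = 0 \<longrightarrow>
        (let mu = sqrt (knf / D) in mu > 0 \<and> lam > 0 \<and> Lam_star \<alpha> Rtot L0 mu lam > 0))
   \<and>
    (\<forall>mu lam. mu > 0 \<longrightarrow> lam > 0 \<longrightarrow> Lam_star \<alpha> Rtot L0 mu lam > 0 \<longrightarrow>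
        (let knf = D * mu^2;
             kpf = D * mu^2 / (lam powr (\<alpha> - 1) - lam powr \<alpha> * norm1 \<alpha> L0 mu / (mu * Rtot))
         in knf > 0 \<and> kpf > 0 \<and> Lam \<alpha> D Rtot L0 knf kpf \<le> 0 \<and>
            gfun \<alpha> D Rtot L0 knf kpf lam = 0))"
proof (intro conjI allI impI)
  fix knf kpf lam :: real
  assume "knf > 0" "kpf > 0" "lam > 0" "gfun \<alpha> D Rtot L0 knf kpf lam = 0"
  then show "let mu = sqrt (knf / D) in mu > 0 \<and> lam > 0 \<and> Lam_star \<alpha> Rtot L0 mu lam > 0"
    using Lam_star_pos_if_gfun_root assms by (simp add: Let_def)
next
  fix mu lam :: real
  assume mu: "mu > 0" and "lam > 0" "Lam_star \<alpha> Rtot L0 mu lam > 0"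
  moreover have "norm1 \<alpha> L0 mu > 0"
    using setting mu \<open>L0 > 0\<close> by (rule norm1_pos)
  ultimately show "let knf = D * mu^2;
             kpf = D * mu^2 / (lam powr (\<alpha> - 1) - lam powr \<alpha> * norm1 \<alpha> L0 mu / (mu * Rtot))
         in knf > 0 \<and> kpf > 0 \<and> Lam \<alpha> D Rtot L0 knf kpf \<le> 0 \<and>
            gfun \<alpha> D Rtot L0 knf kpf lam = 0"
    using gfun_root_if_Lam_star_pos[of \<alpha> D Rtot mu lam L0] assms by (simp add: Let_def)
qed

end
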